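(* Let $n\ge 3$ be an integer and let $P_1,\dots,P_n\in\mathbb{R}^2$ be the vertices, labelled counter-clockwise, of a convex regular polygon with $n$ edges, positioned so that $P_1$ lies on the line $\{y=0\}$ and every other vertex satisfies $\overrightarrow{OP_i}\cdot\vec e_2>0$, where $O$ is the origin and $\vec e_2=(0,1)^T$. Indices are taken modulo $n$ (so $P_{n+1}=P_1$). Let $k>0$ and $\kappa>0$ be constants and set $$C:=\frac{|\overrightarrow{P_iP_{i+1}}\times\overrightarrow{P_{i-1}P_i}|}{|\overrightarrow{P_iP_{i+1}}|^2\,|\overrightarrow{P_{i-1}P_i}|^2},$$ which is independent of $i$. For $\bm V=(\vec v_2,\dots,\vec v_n)\in\mathbb{R}^{2n-2}$ (each $\vec v_i\in\mathbb{R}^2$) put $\vec v_1=\vec v_{n+1}=(0,0)^T$ and define $$J_s(\bm V)=\frac{k}{2}\sum_{i=1}^{n}|\vec v_{i+1}-\vec v_i|^2,$$ $$J_b(\bm V)=\frac{\kappa C^2}{2}\sum_{i=2}^{n}\Big|\overrightarrow{P_{i-1}P_i}\cdot\vec v_{i+1}+\big(\overrightarrow{P_iP_{i+1}}-\overrightarrow{P_{i-1}P_i}\big)\cdot\vec v_i-\overrightarrow{P_iP_{i+1}}\cdot\vec v_{i-1}\Big|^2,$$ and $J=J_s+J_b$. Let $$\mathcal U:=\Big\{\bm V=(\vec v_i)_{i=2}^n\in\mathbb{R}^{2n-2}:\ (\overrightarrow{OP_i}+\vec v_i)\cdot\vec e_2\ge 0\ \text{ for all } 2\le i\le n\Big\}.$$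 Then for every $\bm F\in\mathbb{R}^{2n-2}$ the minimization problem $$\inf_{\bm V\in\mathcal U}\big(J(\bm V)-\bm F^T\bm V\big)$$ admits a unique minimizer $\bm U\in\mathcal U$. Equivalently, writing $J(\bm V)=\tfrac12\bm V^T\mathcal A\bm V$ with $\mathcal A$ the symmetric $(2n-2)\times(2n-2)$ matrix of the quadratic form $J$, there exists a unique $\bm U\in\mathcal U$ such that $$(\mathcal A\bm U)\cdot(\bm V-\bm U)\ge \bm F\cdot(\bm V-\bm U)\quad\text{for all }\bm V\in\mathcal U.$$
   Context: This is a discrete model for the linearized deformation of a regular polygon (vertex $P_1$ clamped, i.e. undergoing zero displacement) that is not allowed to cross the rigid flat line $\{y=0\}$ on which it initially touches only at $P_1$. $\bm V$ collects the displacements $\vec v_i$ of the vertices $P_i$, $2\le i\le n$; $J_s$ is the stretching energy of the edges and $J_b$ is the linearized bending energy associated with changes of the angles between consecutive edges. $\bm F=(\vec f_i)_{i=2}^n$ is the array of applied forces on the vertices $P_2,\dots,P_n$. For vectors $a,b\in\mathbb{R}^2$, $a\cdot b$ is the Euclidean inner product and $|a\times b|$ is the absolute value of the scalar cross product $a_1b_2-a_2b_1$. *)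

theory Defs
  imports "HOL-Analysis.Analysis"
begin

text \<open>Points and displacements live in \<open>real^2\<close>; component 1 is x, component 2 is y.
  The vertices are a function \<open>P :: nat \<Rightarrow> real^2\<close>, the vertex \<open>P_i\<close> being \<open>P i\<close>;
  the regular-polygon hypothesis makes \<open>P\<close> n-periodic, so \<open>P (n+1) = P 1\<close>.
  A displacement array \<open>V = (v_2,...,v_n)\<close> is a function \<open>V :: nat \<Rightarrow> real^2\<close>
  vanishing outside \<open>{2..n}\<close>; this encodes \<open>v_1 = v_{n+1} = 0\<close>.\<close>

definition cross2 :: "real^2 \<Rightarrow> real^2 \<Rightarrow> real" where
  "cross2 a b = a$1 * b$2 - a$2 * b$1"

definition e2 :: "real^2" where
  "e2 = vector [0, 1]"

definition regular_ccw_polygon :: "nat \<Rightarrow> (nat \<Rightarrow> real^2) \<Rightarrow> bool" where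
  "regular_ccw_polygon n P \<longleftrightarrow> (\<exists>c r \<theta>. r > 0 \<and>
     (\<forall>i. P i = c + r *\<^sub>R vector [cos (\<theta> + 2 * pi * real i / real n),
                                    sin (\<theta> + 2 * pi * real i / real n)]))"

text \<open>The constant C, computed at a vertex i (it is independent of i).\<close>
definition Cconst :: "(nat \<Rightarrow> real^2) \<Rightarrow> nat \<Rightarrow> real" where
  "Cconst P i = \<bar>cross2 (P (i+1) - P i) (P i - P (i-1))\<bar> /
                 ((norm (P (i+1) - P i))^2 * (norm (P i - P (i-1)))^2)"

definition admissible_disp :: "nat \<Rightarrow> (nat \<Rightarrow> real^2) \<Rightarrow> bool" where
  "admissible_disp n V \<longleftrightarrow> (\<forall>i. i \<notin> {2..n} \<longrightarrow> V i = 0)"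

definition Js :: "nat \<Rightarrow> real \<Rightarrow> (nat \<Rightarrow> real^2) \<Rightarrow> real" where
  "Js n k V = k / 2 * (\<Sum>i=1..n. (norm (V (i+1) - V i))^2)"

definition Jb :: "nat \<Rightarrow> real \<Rightarrow> (nat \<Rightarrow> real^2) \<Rightarrow> (nat \<Rightarrow> real^2) \<Rightarrow> real" where
  "Jb n \<kappa> P V = \<kappa> * (Cconst P 2)^2 / 2 *
     (\<Sum>i=2..n. \<bar>(P i - P (i-1)) \<bullet> V (i+1)
               + ((P (i+1) - P i) - (P i - P (i-1))) \<bullet> V i
               - (P (i+1) - P i) \<bullet> V (i-1)\<bar>^2)"

definition Jtot :: "nat \<Rightarrow> real \<Rightarrow> real \<Rightarrow> (nat \<Rightarrow> real^2) \<Rightarrow> (nat \<Rightarrow> real^2) \<Rightarrow> real" where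
  "Jtot n k \<kappa> P V = Js n k V + Jb n \<kappa> P V"

definition Uset :: "nat \<Rightarrow> (nat \<Rightarrow> real^2) \<Rightarrow> (nat \<Rightarrow> real^2) set" where
  "Uset n P = {V. admissible_disp n V \<and> (\<forall>i\<in>{2..n}. (P i + V i) \<bullet> e2 \<ge> 0)}"

definition work :: "nat \<Rightarrow> (nat \<Rightarrow> real^2) \<Rightarrow> (nat \<Rightarrow> real^2) \<Rightarrow> real" where
  "work n F V = (\<Sum>i=2..n. F i \<bullet> V i)"

end

theory Submission
  imports Defs
begin

text \<open>Since \<open>J\<^sub>b \<ge> 0\<close>, the stretching energy of the clamped chain controls everything: with
  \<open>v\<^sub>1 = 0\<close>, every \<open>|v\<^sub>i|\<close> is at most the total variation \<open>T = \<Sum>|v\<^sub>i\<^sub>+\<^sub>1 - v\<^sub>i|\<close>, and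
  Cauchy-Schwarz gives \<open>k T\<^sup>2 \<le> 2n J\<^sub>s\<close>. Hence the sublevel set \<open>J - F\<^sup>TV \<le> 0\<close> lies in a compact box
  and a minimizer exists on the closed set \<open>\<U>\<close>. The same estimate makes \<open>J\<close> positive definite,
  so \<open>J - F\<^sup>TV\<close> is strictly midpoint convex on the convex set \<open>\<U>\<close> and the minimizer is unique.\<close>

lemma continuous_attains_inf_sublevel:
  fixes f :: "'a::topological_space \<Rightarrow> real"
  assumes "closed S" and "continuous_on UNIV f" and "x\<^sub>0 \<in> S" and "compact K"
    and "\<And>x. x \<in> S \<Longrightarrow> f x \<le> f x\<^sub>0 \<Longrightarrow> x \<in> K"
  shows "\<exists>x\<in>S. \<forall>y\<in>S. f x \<le> f y"
proof -
  define C where "C = K \<inter> (S \<inter> {x. f x \<le> f x\<^sub>0})"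
  have "compact C"
    unfolding C_def using assms(1,2,4) by (intro compact_Int_closed closed_Int closed_Collect_le) auto
  moreover have "x\<^sub>0 \<in> C"
    unfolding C_def using assms(3,5) by auto
  ultimately obtain x where "x \<in> C" and x_min: "\<forall>y\<in>C. f x \<le> f y"
    using continuous_attains_inf[of C f] continuous_on_subset[OF assms(2)] by blast
  moreover have "f x \<le> f y" if "y \<in> S" for y
  proof (cases "f y \<le> f x\<^sub>0")
    case True
    then show ?thesis
      using that x_min assms(5) unfolding C_def by blast
  next
    case False
    then show ?thesis
      using x_min \<open>x\<^sub>0 \<in> C\<close> by fastforce
  qed
  ultimately show ?thesis
    unfolding C_def by blast
qed

lemma minimizer_unique_if_strict_midpoint_convex:
  fixes f :: "'a \<Rightarrow> real"
  assumes "\<And>x y. x \<in> S \<Longrightarrow> y \<in> S \<Longrightarrow> m x y \<in> S"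
    and "\<And>x y. x \<in> S \<Longrightarrow> y \<in> S \<Longrightarrow> x \<noteq> y \<Longrightarrow> f (m x y) < (f x + f y) / 2"
    and "x \<in> S" "\<forall>z\<in>S. f x \<le> f z" and "y \<in> S" "\<forall>z\<in>S. f y \<le> f z"
  shows "x = y"
proof (rule ccontr)
  assume "x \<noteq> y"
  then have "f (m x y) < (f x + f y) / 2"
    using assms(2,3,5) by blast
  moreover have "f x \<le> f (m x y)" "f y \<le> f (m x y)"
    using assms(1,3-6) by auto
  ultimately show False
    by simp
qed

lemma norm_midpoint_sq:
  fixes x y :: "'a::real_inner"
  shows "(norm (midpoint x y))\<^sup>2 = ((norm x)\<^sup>2 + (norm y)\<^sup>2) / 2 - (norm (x - y))\<^sup>2 / 4"
  by (simp add: midpoint_def power2_norm_eq_inner inner_add_left inner_add_right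
      inner_diff_left inner_diff_right inner_commute field_simps)

lemma sum_norm_midpoint_sq:
  fixes a b :: "'i \<Rightarrow> 'a::real_inner"
  shows "(\<Sum>i\<in>I. (norm (midpoint (a i) (b i)))\<^sup>2)
    = ((\<Sum>i\<in>I. (norm (a i))\<^sup>2) + (\<Sum>i\<in>I. (norm (b i))\<^sup>2)) / 2 - (\<Sum>i\<in>I. (norm (a i - b i))\<^sup>2) / 4"
  by (simp add: norm_midpoint_sq sum_subtractf sum.distrib flip: sum_divide_distrib)

lemma midpoint_diff_midpoint:
  fixes a b c d :: "'a::real_vector"
  shows "midpoint a b - midpoint c d = midpoint (a - c) (b - d)"
  by (simp add: midpoint_def algebra_simps)

lemma norm_diff_le_sum_norm_diff:
  fixes V :: "nat \<Rightarrow> 'a::real_normed_vector"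
  assumes "m \<le> i"
  shows "norm (V i - V m) \<le> (\<Sum>j=m..<i. norm (V (Suc j) - V j))"
  using norm_sum[of "\<lambda>j. V (Suc j) - V j" "{m..<i}"] by (simp add: sum_Suc_diff' assms)

definition chain_variation :: "nat \<Rightarrow> (nat \<Rightarrow> real^2) \<Rightarrow> real" where
  "chain_variation n V = (\<Sum>i=1..n. norm (V (i+1) - V i))"

definition bending_strain :: "(nat \<Rightarrow> real^2) \<Rightarrow> (nat \<Rightarrow> real^2) \<Rightarrow> nat \<Rightarrow> real" where
  "bending_strain P V i = (P i - P (i-1)) \<bullet> V (i+1)
     + ((P (i+1) - P i) - (P i - P (i-1))) \<bullet> V i - (P (i+1) - P i) \<bullet> V (i-1)"

lemma Jb_eq_sum_bending_strain:
  "Jb n \<kappa> P V = \<kappa> * (Cconst P 2)\<^sup>2 / 2 * (\<Sum>i=2..n. (bending_strain P V i)\<^sup>2)"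
  unfolding Jb_def bending_strain_def by simp

lemma Js_le_Jtot: "0 \<le> \<kappa> \<Longrightarrow> Js n k V \<le> Jtot n k \<kappa> P V"
  unfolding Jtot_def Jb_def by (simp add: sum_nonneg)

lemma norm_le_chain_variation:
  assumes "admissible_disp n V" and "i \<in> {2..n}"
  shows "norm (V i) \<le> chain_variation n V"
proof -
  have "V 1 = 0"
    using assms(1) unfolding admissible_disp_def by simp
  then have "norm (V i) \<le> (\<Sum>j=1..<i. norm (V (j+1) - V j))"
    using norm_diff_le_sum_norm_diff[of 1 i V] assms(2) by simp
  also have "\<dots> \<le> chain_variation n V"
    unfolding chain_variation_def using assms(2) by (intro sum_mono2) auto
  finally show ?thesis .
qed

lemma chain_variation_sq_le_Js:
  assumes "0 \<le> k"
  shows "k * (chain_variation n V)\<^sup>2 \<le> 2 * real n * Js n k V"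
proof -
  have "(chain_variation n V)\<^sup>2 \<le> (\<Sum>i=1..n. (norm (V (i+1) - V i))\<^sup>2) * real n"
    unfolding chain_variation_def
    using sum_squared_le_sum_of_squares[of "\<lambda>i. norm (V (i+1) - V i)" "{1..n}"] by simp
  then have "k * (chain_variation n V)\<^sup>2 \<le> k * ((\<Sum>i=1..n. (norm (V (i+1) - V i))\<^sup>2) * real n)"
    by (rule mult_left_mono[OF _ assms])
  then show ?thesis
    unfolding Js_def by (simp add: algebra_simps)
qed

lemma Js_pos:
  assumes "0 < k" and "admissible_disp n V" and "V \<noteq> (\<lambda>_. 0)"
  shows "0 < Js n k V"
proof -
  obtain i where "V i \<noteq> 0"
    using assms(3) by blast
  then have i: "i \<in> {2..n}"
    using assms(2) unfolding admissible_disp_def by blast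
  have "0 < k * (norm (V i))\<^sup>2"
    using assms(1) \<open>V i \<noteq> 0\<close> by simp
  also have "\<dots> \<le> k * (chain_variation n V)\<^sup>2"
    using norm_le_chain_variation[OF assms(2) i] assms(1) by (simp add: power_mono)
  also have "\<dots> \<le> 2 * real n * Js n k V"
    using chain_variation_sq_le_Js assms(1) by simp
  finally show ?thesis
    by (simp add: zero_less_mult_iff)
qed

lemma work_le_chain_variation:
  assumes "admissible_disp n V"
  shows "work n F V \<le> (\<Sum>i=2..n. norm (F i)) * chain_variation n V"
proof -
  have "work n F V \<le> (\<Sum>i=2..n. norm (F i) * norm (V i))"
    unfolding work_def by (intro sum_mono) (simp add: norm_cauchy_schwarz)
  also have "\<dots> \<le> (\<Sum>i=2..n. norm (F i) * chain_variation n V)"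
    using norm_le_chain_variation[OF assms] by (intro sum_mono mult_left_mono) auto
  finally show ?thesis
    by (simp add: sum_distrib_right)
qed

lemma chain_variation_le_if_sublevel:
  assumes "0 < k" and "0 \<le> \<kappa>" and "admissible_disp n V"
    and "Jtot n k \<kappa> P V - work n F V \<le> 0"
  shows "chain_variation n V \<le> 2 * real n * (\<Sum>i=2..n. norm (F i)) / k"
proof -
  define T M where "T = chain_variation n V" and "M = (\<Sum>i=2..n. norm (F i))"
  have "Js n k V \<le> M * T"
    using Js_le_Jtot[OF assms(2), of n k V P] work_le_chain_variation[OF assms(3), of F] assms(4)
    unfolding T_def M_def by linarith
  then have "2 * real n * Js n k V \<le> 2 * real n * (M * T)"
    by (simp add: mult_left_mono)
  then have "k * T\<^sup>2 \<le> 2 * real n * (M * T)"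
    using chain_variation_sq_le_Js[of k n V] assms(1) unfolding T_def by linarith
  then have "k * T * T \<le> (2 * real n * M) * T"
    by (simp add: power2_eq_square algebra_simps)
  moreover have "0 \<le> T" "0 \<le> M"
    unfolding T_def M_def chain_variation_def by (simp_all add: sum_nonneg)
  ultimately have "k * T \<le> 2 * real n * M"
    using assms(1) by (cases "T = 0") simp_all
  then show ?thesis
    unfolding T_def M_def using assms(1) by (simp add: field_simps)
qed

lemma compact_clamped_box:
  "compact (PiE UNIV (\<lambda>i. if i \<in> {2..n} then cball (0::real^2) R else {0}))"
proof -
  have "compactin (product_topology (\<lambda>i. euclidean) UNIV)
          (PiE UNIV (\<lambda>i. if i \<in> {2..n} then cball (0::real^2) R else {0}))"
    unfolding compactin_PiE by auto
  then show ?thesis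
    by (simp add: euclidean_product_topology)
qed

lemma closed_Uset: "closed (Uset n P)"
proof -
  have "Uset n P = (\<Inter>i\<in>-{2..n}. {V. V i = 0}) \<inter> (\<Inter>i\<in>{2..n}. {V. 0 \<le> (P i + V i) \<bullet> e2})"
    unfolding Uset_def admissible_disp_def by auto
  also have "closed \<dots>"
    by (intro closed_Int closed_INT ballI closed_Collect_eq closed_Collect_le
        continuous_intros continuous_on_product_coordinates)
  finally show ?thesis .
qed

lemma continuous_on_energy:
  "continuous_on UNIV (\<lambda>V. Jtot n k \<kappa> P V - work n F V)"
  unfolding Jtot_def Js_def Jb_def work_def
  by (intro continuous_intros continuous_on_product_coordinates)

lemma midpoint_in_Uset:
  assumes "U\<^sub>1 \<in> Uset n P" and "U\<^sub>2 \<in> Uset n P"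
  shows "(\<lambda>i. midpoint (U\<^sub>1 i) (U\<^sub>2 i)) \<in> Uset n P"
proof -
  have "0 \<le> (P i + midpoint (U\<^sub>1 i) (U\<^sub>2 i)) \<bullet> e2" if "i \<in> {2..n}" for i
  proof -
    have "2 * ((P i + midpoint (U\<^sub>1 i) (U\<^sub>2 i)) \<bullet> e2) = (P i + U\<^sub>1 i) \<bullet> e2 + (P i + U\<^sub>2 i) \<bullet> e2"
      by (simp add: midpoint_def inner_add_left algebra_simps)
    moreover have "(P i + U\<^sub>1 i) \<bullet> e2 \<ge> 0" "(P i + U\<^sub>2 i) \<bullet> e2 \<ge> 0"
      using assms that unfolding Uset_def by auto
    ultimately show ?thesis
      by linarith
  qed
  moreover have "midpoint (U\<^sub>1 i) (U\<^sub>2 i) = 0" if "i \<notin> {2..n}" for i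
    using assms that unfolding Uset_def admissible_disp_def by auto
  ultimately show ?thesis
    unfolding Uset_def admissible_disp_def by blast
qed

lemma Jtot_midpoint:
  "Jtot n k \<kappa> P (\<lambda>i. midpoint (U\<^sub>1 i) (U\<^sub>2 i))
     = (Jtot n k \<kappa> P U\<^sub>1 + Jtot n k \<kappa> P U\<^sub>2) / 2 - Jtot n k \<kappa> P (\<lambda>i. U\<^sub>1 i - U\<^sub>2 i) / 4"
proof -
  have "bending_strain P (\<lambda>i. midpoint (U\<^sub>1 i) (U\<^sub>2 i)) i
      = midpoint (bending_strain P U\<^sub>1 i) (bending_strain P U\<^sub>2 i)"
    and "bending_strain P (\<lambda>i. U\<^sub>1 i - U\<^sub>2 i) i
      = bending_strain P U\<^sub>1 i - bending_strain P U\<^sub>2 i" for i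
    unfolding bending_strain_def midpoint_def by (simp_all add: inner_add_right inner_diff_right algebra_simps)
  then have strain_sum: "(\<Sum>i=2..n. (bending_strain P (\<lambda>i. midpoint (U\<^sub>1 i) (U\<^sub>2 i)) i)\<^sup>2)
      = ((\<Sum>i=2..n. (bending_strain P U\<^sub>1 i)\<^sup>2) + (\<Sum>i=2..n. (bending_strain P U\<^sub>2 i)\<^sup>2)) / 2
        - (\<Sum>i=2..n. (bending_strain P (\<lambda>i. U\<^sub>1 i - U\<^sub>2 i) i)\<^sup>2) / 4"
    using sum_norm_midpoint_sq[of "bending_strain P U\<^sub>1" "bending_strain P U\<^sub>2" "{2..n}"] by simp
  have Jb: "Jb n \<kappa> P (\<lambda>i. midpoint (U\<^sub>1 i) (U\<^sub>2 i))
      = (Jb n \<kappa> P U\<^sub>1 + Jb n \<kappa> P U\<^sub>2) / 2 - Jb n \<kappa> P (\<lambda>i. U\<^sub>1 i - U\<^sub>2 i) / 4"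
    unfolding Jb_eq_sum_bending_strain strain_sum by (simp add: algebra_simps)
  have Js: "Js n k (\<lambda>i. midpoint (U\<^sub>1 i) (U\<^sub>2 i))
      = (Js n k U\<^sub>1 + Js n k U\<^sub>2) / 2 - Js n k (\<lambda>i. U\<^sub>1 i - U\<^sub>2 i) / 4"
    unfolding Js_def midpoint_diff_midpoint sum_norm_midpoint_sq by (simp add: algebra_simps)
  show ?thesis
    unfolding Jtot_def Js Jb by (simp add: field_simps)
qed

lemma work_midpoint:
  "work n F (\<lambda>i. midpoint (U\<^sub>1 i) (U\<^sub>2 i)) = (work n F U\<^sub>1 + work n F U\<^sub>2) / 2"
  unfolding work_def midpoint_def by (simp add: inner_add_right sum.distrib flip: sum_divide_distrib)

lemma energy_strict_midpoint_convex:
  assumes "0 < k" and "0 \<le> \<kappa>" and "U\<^sub>1 \<in> Uset n P" and "U\<^sub>2 \<in> Uset n P" and "U\<^sub>1 \<noteq> U\<^sub>2"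
  shows "Jtot n k \<kappa> P (\<lambda>i. midpoint (U\<^sub>1 i) (U\<^sub>2 i)) - work n F (\<lambda>i. midpoint (U\<^sub>1 i) (U\<^sub>2 i))
    < ((Jtot n k \<kappa> P U\<^sub>1 - work n F U\<^sub>1) + (Jtot n k \<kappa> P U\<^sub>2 - work n F U\<^sub>2)) / 2"
proof -
  have "admissible_disp n (\<lambda>i. U\<^sub>1 i - U\<^sub>2 i)"
    using assms(3,4) unfolding Uset_def admissible_disp_def by simp
  moreover have "(\<lambda>i. U\<^sub>1 i - U\<^sub>2 i) \<noteq> (\<lambda>_. 0)"
    using assms(5) by (auto simp: fun_eq_iff)
  ultimately have "0 < Jtot n k \<kappa> P (\<lambda>i. U\<^sub>1 i - U\<^sub>2 i)"
    using Js_pos[OF assms(1)] Js_le_Jtot[OF assms(2)] by (meson less_le_trans)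
  then show ?thesis
    unfolding Jtot_midpoint work_midpoint by (simp add: field_simps)
qed

lemma sublevel_in_clamped_box:
  assumes "0 < k" and "0 \<le> \<kappa>" and "V \<in> Uset n P" and "Jtot n k \<kappa> P V - work n F V \<le> 0"
  shows "V \<in> PiE UNIV (\<lambda>i. if i \<in> {2..n} then cball 0 (2 * real n * (\<Sum>i=2..n. norm (F i)) / k) else {0})"
proof -
  have adm: "admissible_disp n V"
    using assms(3) unfolding Uset_def by simp
  have "chain_variation n V \<le> 2 * real n * (\<Sum>i=2..n. norm (F i)) / k"
    by (rule chain_variation_le_if_sublevel[OF assms(1,2) adm assms(4)])
  then show ?thesis
    using norm_le_chain_variation[OF adm] adm unfolding admissible_disp_def by force
qed

theorem mainTheorem1:
  fixes n :: nat and P F :: "nat \<Rightarrow> real^2" and k \<kappa> :: real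
  assumes "n \<ge> 3"
    and "regular_ccw_polygon n P"
    and "P 1 \<bullet> e2 = 0"
    and "\<forall>i\<in>{2..n}. P i \<bullet> e2 > 0"
    and "k > 0" and "\<kappa> > 0"
  shows "\<exists>!U. U \<in> Uset n P \<and>
           (\<forall>V\<in>Uset n P. Jtot n k \<kappa> P U - work n F U \<le> Jtot n k \<kappa> P V - work n F V)"
proof -
  define f where "f V = Jtot n k \<kappa> P V - work n F V" for V
  have \<kappa>: "0 \<le> \<kappa>"
    using assms(6) by simp
  have zero_in_Uset: "(\<lambda>_. 0) \<in> Uset n P"
    using assms(4) unfolding Uset_def admissible_disp_def by (auto simp: less_imp_le)
  have "f (\<lambda>_. 0) = 0"
    unfolding f_def Jtot_def Js_def Jb_def work_def by simp
  then obtain U where "U \<in> Uset n P" and "\<forall>V\<in>Uset n P. f U \<le> f V"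
    using continuous_attains_inf_sublevel[OF closed_Uset continuous_on_energy zero_in_Uset
        compact_clamped_box] sublevel_in_clamped_box[OF assms(5) \<kappa>] unfolding f_def by metis
  moreover have "U\<^sub>1 = U\<^sub>2"
    if "U\<^sub>1 \<in> Uset n P" "\<forall>V\<in>Uset n P. f U\<^sub>1 \<le> f V" "U\<^sub>2 \<in> Uset n P" "\<forall>V\<in>Uset n P. f U\<^sub>2 \<le> f V"
    for U\<^sub>1 U\<^sub>2
    using minimizer_unique_if_strict_midpoint_convex[where m = "\<lambda>U\<^sub>1 U\<^sub>2 i. midpoint (U\<^sub>1 i) (U\<^sub>2 i)",
        OF midpoint_in_Uset _ that] energy_strict_midpoint_convex[OF assms(5) \<kappa>]
    unfolding f_def by blast
  ultimately show ?thesis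
    unfolding f_def by blast
qed

end
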